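(* Consider any learner in the $K$-armed bandit setting described in the context, and suppose the self-bounding condition holds with gap vector $\Delta$ and constant $C$. Then for every $x>0$ and every $z>0$, $$\mathbb{S}_1(x)\le z(\mathrm{Reg}^T+C)+\frac{1}{z}\cdot\frac{x}{4\Delta_{\min}},\qquad \mathbb{S}_2(x)\le z(\mathrm{Reg}^T+C)+\frac{1}{z}\sum_{i\in V}\frac{x}{4\Delta_i}.$$
   Context: Bandit setting: in round $t=1,\dots,T$ the learner picks $i^t\in[K]$ from a distribution $p^t$ (determined by the history before round $t$, so $\Pr[i^t=i]=\mathbb{E}[p^t_i]$), the environment picks $\ell^t\in[0,1]^K$; $\mathrm{Reg}^T=\mathbb{E}[\sum_t\ell^t_{i^t}-\sum_t\ell^t_{i^\star}]$ with $i^\star\in\arg\min_i\mathbb{E}[\sum_t\ell^t_i]$. Self-bounding condition: there exist $\Delta\in[0,1]^K$, $C\ge0$ with $\mathrm{Reg}^T\ge\mathbb{E}[\sum_{t}\sum_{i}\Pr[i^t=i]\Delta_i]-C$; $U=\{i:\Delta_i=0\}$, $V=[K]\setminus U$ (assumed nonempty), $\Delta_{\min}=\min_{i\in V}\Delta_i$. Self-bounding quantities: $\mathbb{S}_1(x)=\mathbb{E}\big[\sqrt{x\sum_{t=1}^T\sum_{i\in V}p^t_i}\big]$ and $\mathbb{S}_2(x)=\mathbb{E}\big[\sum_{i\in V}\sqrt{x\sum_{t=1}^Tp^t_i}\big]$. *)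

theory Defs
  imports "HOL-Probability.Probability"
begin

text \<open>Bandit setting over a probability space M (all randomness of learner and environment).
Rounds are 1..T, arms are 1..K.
  p t i w : probability the learner assigns to arm i in round t (random, history dependent);
  I t w   : arm played in round t;
  l t i w : loss of arm i in round t.\<close>

definition bandit_regret ::
  "'a measure \<Rightarrow> nat \<Rightarrow> (nat \<Rightarrow> 'a \<Rightarrow> nat) \<Rightarrow> (nat \<Rightarrow> nat \<Rightarrow> 'a \<Rightarrow> real) \<Rightarrow> nat \<Rightarrow> real" where
  "bandit_regret M T I l istar =
     (\<integral>w. (\<Sum>t=1..T. l t (I t w) w) \<partial>M) - (\<integral>w. (\<Sum>t=1..T. l t istar w) \<partial>M)"

definition S1 ::
  "'a measure \<Rightarrow> nat \<Rightarrow> nat set \<Rightarrow> (nat \<Rightarrow> nat \<Rightarrow> 'a \<Rightarrow> real) \<Rightarrow> real \<Rightarrow> real" where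
  "S1 M T V p x = (\<integral>w. sqrt (x * (\<Sum>t=1..T. \<Sum>i\<in>V. p t i w)) \<partial>M)"

definition S2 ::
  "'a measure \<Rightarrow> nat \<Rightarrow> nat set \<Rightarrow> (nat \<Rightarrow> nat \<Rightarrow> 'a \<Rightarrow> real) \<Rightarrow> real \<Rightarrow> real" where
  "S2 M T V p x = (\<integral>w. (\<Sum>i\<in>V. sqrt (x * (\<Sum>t=1..T. p t i w))) \<partial>M)"

end

theory Submission
  imports Defs
begin

text \<open>Pointwise, \<open>sqrt (x * a) \<le> c * a + x / (4 * c)\<close> for every \<open>c > 0\<close> (AM-GM).
  Taking \<open>c = z * \<Delta> i\<close> (or \<open>c = z * \<Delta>\<^sub>m\<^sub>i\<^sub>n\<close>) and integrating, the linear part becomes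
  \<open>z\<close> times the expected gap-weighted number of pulls of suboptimal arms, which the
  self-bounding condition bounds by \<open>z * (Reg + C)\<close>.\<close>

lemma sqrt_mult_le_linear:
  fixes a c x :: real
  assumes "0 \<le> a" "0 < c" "0 \<le> x"
  shows "sqrt (x * a) \<le> c * a + x / (4 * c)"
proof -
  have "0 \<le> (2 * c * sqrt a - sqrt x)\<^sup>2" by simp
  also have "\<dots> = 4 * c * (c * a + x / (4 * c) - sqrt (x * a))"
    using assms by (simp add: power2_eq_square algebra_simps real_sqrt_mult)
  finally show ?thesis using assms by (simp add: zero_le_mult_iff)
qed

lemma (in prob_space) integral_sum_sqrt_le:
  fixes f :: "'i \<Rightarrow> 'a \<Rightarrow> real" and c :: "'i \<Rightarrow> real"
  assumes "finite V"
    and f_int: "\<And>i. i \<in> V \<Longrightarrow> integrable M (f i)"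
    and f_nonneg: "\<And>i w. i \<in> V \<Longrightarrow> w \<in> space M \<Longrightarrow> 0 \<le> f i w"
    and c_pos: "\<And>i. i \<in> V \<Longrightarrow> 0 < c i" and "0 \<le> x"
  shows "(\<integral>w. (\<Sum>i\<in>V. sqrt (x * f i w)) \<partial>M) \<le> (\<Sum>i\<in>V. c i * (\<integral>w. f i w \<partial>M) + x / (4 * c i))"
proof -
  have "(\<integral>w. (\<Sum>i\<in>V. sqrt (x * f i w)) \<partial>M) \<le> (\<integral>w. (\<Sum>i\<in>V. c i * f i w + x / (4 * c i)) \<partial>M)"
  proof (rule integral_mono')
    show "integrable M (\<lambda>w. \<Sum>i\<in>V. c i * f i w + x / (4 * c i))"
      using f_int by auto
    show "(\<Sum>i\<in>V. sqrt (x * f i w)) \<le> (\<Sum>i\<in>V. c i * f i w + x / (4 * c i))" if "w \<in> space M" for w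
      using that f_nonneg c_pos \<open>0 \<le> x\<close> by (intro sum_mono sqrt_mult_le_linear) auto
    show "0 \<le> (\<Sum>i\<in>V. c i * f i w + x / (4 * c i))" if "w \<in> space M" for w
      using that f_nonneg c_pos \<open>0 \<le> x\<close>
      by (intro sum_nonneg add_nonneg_nonneg mult_nonneg_nonneg divide_nonneg_pos)
        (auto intro: less_imp_le)
  qed
  also have "\<dots> = (\<Sum>i\<in>V. c i * (\<integral>w. f i w \<partial>M) + x / (4 * c i))"
    using f_int by (simp add: Bochner_Integration.integral_sum prob_space)
  finally show ?thesis .
qed

lemma (in prob_space) integral_sqrt_le:
  fixes f :: "'a \<Rightarrow> real"
  assumes "integrable M f" "\<And>w. w \<in> space M \<Longrightarrow> 0 \<le> f w" "0 < c" "0 \<le> x"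
  shows "(\<integral>w. sqrt (x * f w) \<partial>M) \<le> c * (\<integral>w. f w \<partial>M) + x / (4 * c)"
  using integral_sum_sqrt_le[of "{()}" "\<lambda>_. f" "\<lambda>_. c" x] assms by simp

lemma expected_gap_le_regret:
  fixes M :: "'a measure"
  assumes I_prob: "\<And>t i. t \<in> {1..T} \<Longrightarrow> i \<in> {1..K} \<Longrightarrow>
                   measure M {w \<in> space M. I t w = i} = (\<integral>w. p t i w \<partial>M)"
    and self_bounding: "bandit_regret M T I l istar \<ge>
          (\<Sum>t=1..T. \<Sum>i=1..K. measure M {w \<in> space M. I t w = i} * \<Delta> i) - C"
  shows "(\<Sum>i\<in>{i \<in> {1..K}. \<Delta> i \<noteq> 0}. \<Delta> i * (\<Sum>t=1..T. \<integral>w. p t i w \<partial>M))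
           \<le> bandit_regret M T I l istar + C"
proof -
  have "(\<Sum>i\<in>{i \<in> {1..K}. \<Delta> i \<noteq> 0}. \<Delta> i * (\<Sum>t=1..T. \<integral>w. p t i w \<partial>M))
      = (\<Sum>i=1..K. \<Delta> i * (\<Sum>t=1..T. \<integral>w. p t i w \<partial>M))"
    by (rule sum.mono_neutral_left) auto
  also have "\<dots> = (\<Sum>t=1..T. \<Sum>i=1..K. \<Delta> i * (\<integral>w. p t i w \<partial>M))"
    by (simp add: sum_distrib_left) (rule sum.swap)
  also have "\<dots> = (\<Sum>t=1..T. \<Sum>i=1..K. measure M {w \<in> space M. I t w = i} * \<Delta> i)"
    using I_prob by (intro sum.cong refl) (simp add: mult.commute)
  finally show ?thesis using self_bounding by linarith
qed

lemma (in prob_space) S1_le: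
  fixes p :: "nat \<Rightarrow> nat \<Rightarrow> 'a \<Rightarrow> real" and \<Delta> :: "nat \<Rightarrow> real"
  assumes "finite V"
    and p_int: "\<And>t i. t \<in> {1..T} \<Longrightarrow> i \<in> V \<Longrightarrow> integrable M (p t i)"
    and p_nonneg: "\<And>t i w. t \<in> {1..T} \<Longrightarrow> i \<in> V \<Longrightarrow> w \<in> space M \<Longrightarrow> 0 \<le> p t i w"
    and "0 < x" "0 < z" "0 < D" and D_le: "\<And>i. i \<in> V \<Longrightarrow> D \<le> \<Delta> i"
    and gap: "(\<Sum>i\<in>V. \<Delta> i * (\<Sum>t=1..T. \<integral>w. p t i w \<partial>M)) \<le> B"
  shows "S1 M T V p x \<le> z * B + (1 / z) * (x / (4 * D))"
proof -
  let ?N = "\<lambda>i. \<Sum>t=1..T. \<integral>w. p t i w \<partial>M"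
  have "S1 M T V p x \<le> z * D * (\<integral>w. (\<Sum>t=1..T. \<Sum>i\<in>V. p t i w) \<partial>M) + x / (4 * (z * D))"
    unfolding S1_def using p_int p_nonneg \<open>0 < x\<close> \<open>0 < z\<close> \<open>0 < D\<close>
    by (intro integral_sqrt_le) (auto intro!: sum_nonneg)
  also have "(\<integral>w. (\<Sum>t=1..T. \<Sum>i\<in>V. p t i w) \<partial>M) = (\<Sum>i\<in>V. ?N i)"
    using p_int by (simp add: Bochner_Integration.integral_sum) (rule sum.swap)
  also have "D * (\<Sum>i\<in>V. ?N i) \<le> (\<Sum>i\<in>V. \<Delta> i * ?N i)"
    using D_le p_nonneg
    by (auto simp: sum_distrib_left intro!: sum_mono mult_right_mono sum_nonneg integral_nonneg_AE)
  then have "z * D * (\<Sum>i\<in>V. ?N i) \<le> z * B"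
    using gap \<open>0 < z\<close> by (simp add: mult.assoc)
  finally show ?thesis by simp
qed

lemma (in prob_space) S2_le:
  fixes p :: "nat \<Rightarrow> nat \<Rightarrow> 'a \<Rightarrow> real" and \<Delta> :: "nat \<Rightarrow> real"
  assumes "finite V"
    and p_int: "\<And>t i. t \<in> {1..T} \<Longrightarrow> i \<in> V \<Longrightarrow> integrable M (p t i)"
    and p_nonneg: "\<And>t i w. t \<in> {1..T} \<Longrightarrow> i \<in> V \<Longrightarrow> w \<in> space M \<Longrightarrow> 0 \<le> p t i w"
    and "0 < x" "0 < z" and \<Delta>_pos: "\<And>i. i \<in> V \<Longrightarrow> 0 < \<Delta> i"
    and gap: "(\<Sum>i\<in>V. \<Delta> i * (\<Sum>t=1..T. \<integral>w. p t i w \<partial>M)) \<le> B"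
  shows "S2 M T V p x \<le> z * B + (1 / z) * (\<Sum>i\<in>V. x / (4 * \<Delta> i))"
proof -
  let ?N = "\<lambda>i. \<Sum>t=1..T. \<integral>w. p t i w \<partial>M"
  have "S2 M T V p x \<le> (\<Sum>i\<in>V. z * \<Delta> i * (\<integral>w. (\<Sum>t=1..T. p t i w) \<partial>M) + x / (4 * (z * \<Delta> i)))"
    unfolding S2_def using \<open>finite V\<close> p_int p_nonneg \<open>0 < x\<close> \<open>0 < z\<close> \<Delta>_pos
    by (intro integral_sum_sqrt_le) (auto intro!: sum_nonneg)
  also have "\<dots> = z * (\<Sum>i\<in>V. \<Delta> i * ?N i) + (1 / z) * (\<Sum>i\<in>V. x / (4 * \<Delta> i))"
    using p_int by (simp add: Bochner_Integration.integral_sum sum.distrib sum_distrib_left mult_ac)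
  also have "\<dots> \<le> z * B + (1 / z) * (\<Sum>i\<in>V. x / (4 * \<Delta> i))"
    using gap \<open>0 < z\<close> by simp
  finally show ?thesis .
qed

theorem lemma3:
  fixes M :: "'a measure" and K T :: nat
    and p :: "nat \<Rightarrow> nat \<Rightarrow> 'a \<Rightarrow> real"
    and I :: "nat \<Rightarrow> 'a \<Rightarrow> nat"
    and l :: "nat \<Rightarrow> nat \<Rightarrow> 'a \<Rightarrow> real"
    and istar :: nat
    and \<Delta> :: "nat \<Rightarrow> real" and C :: real
    and x z :: real
  assumes M: "prob_space M"
    and p_meas: "\<And>t i. t \<in> {1..T} \<Longrightarrow> i \<in> {1..K} \<Longrightarrow> p t i \<in> borel_measurable M"
    and p_nonneg: "\<And>t i w. t \<in> {1..T} \<Longrightarrow> i \<in> {1..K} \<Longrightarrow> w \<in> space M \<Longrightarrow> 0 \<le> p t i w"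
    and p_sum: "\<And>t w. t \<in> {1..T} \<Longrightarrow> w \<in> space M \<Longrightarrow> (\<Sum>i=1..K. p t i w) = 1"
    and I_meas: "\<And>t. t \<in> {1..T} \<Longrightarrow> I t \<in> measurable M (count_space UNIV)"
    and I_range: "\<And>t w. t \<in> {1..T} \<Longrightarrow> w \<in> space M \<Longrightarrow> I t w \<in> {1..K}"
    and I_prob: "\<And>t i. t \<in> {1..T} \<Longrightarrow> i \<in> {1..K} \<Longrightarrow>
                   measure M {w \<in> space M. I t w = i} = (\<integral>w. p t i w \<partial>M)"
    and l_meas: "\<And>t i. t \<in> {1..T} \<Longrightarrow> i \<in> {1..K} \<Longrightarrow> l t i \<in> borel_measurable M"
    and l_range: "\<And>t i w. t \<in> {1..T} \<Longrightarrow> i \<in> {1..K} \<Longrightarrow> w \<in> space M \<Longrightarrow>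
                   0 \<le> l t i w \<and> l t i w \<le> 1"
    and istar: "istar \<in> {1..K}"
    and istar_min: "\<And>i. i \<in> {1..K} \<Longrightarrow>
                   (\<integral>w. (\<Sum>t=1..T. l t istar w) \<partial>M) \<le> (\<integral>w. (\<Sum>t=1..T. l t i w) \<partial>M)"
    and Delta_range: "\<And>i. i \<in> {1..K} \<Longrightarrow> 0 \<le> \<Delta> i \<and> \<Delta> i \<le> 1"
    and C_nonneg: "0 \<le> C"
    and self_bounding: "bandit_regret M T I l istar \<ge>
          (\<Sum>t=1..T. \<Sum>i=1..K. measure M {w \<in> space M. I t w = i} * \<Delta> i) - C"
    and V_nonempty: "{i \<in> {1..K}. \<Delta> i \<noteq> 0} \<noteq> {}"
    and x_pos: "0 < x" and z_pos: "0 < z"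
  shows "S1 M T {i \<in> {1..K}. \<Delta> i \<noteq> 0} p x \<le>
           z * (bandit_regret M T I l istar + C)
           + (1 / z) * (x / (4 * Min (\<Delta> ` {i \<in> {1..K}. \<Delta> i \<noteq> 0})))
       \<and> S2 M T {i \<in> {1..K}. \<Delta> i \<noteq> 0} p x \<le>
           z * (bandit_regret M T I l istar + C)
           + (1 / z) * (\<Sum>i \<in> {i \<in> {1..K}. \<Delta> i \<noteq> 0}. x / (4 * \<Delta> i))"
proof -
  interpret prob_space M by (rule M)
  define V where "V = {i \<in> {1..K}. \<Delta> i \<noteq> 0}"
  have "finite V" and V_sub: "V \<subseteq> {1..K}" unfolding V_def by auto
  have \<Delta>_pos: "0 < \<Delta> i" if "i \<in> V" for i
    using that Delta_range unfolding V_def by force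
  have p_int: "integrable M (p t i)" if "t \<in> {1..T}" "i \<in> {1..K}" for t i
  proof (rule integrable_const_bound[where B=1])
    have "p t i w \<le> (\<Sum>j=1..K. p t j w)" if "w \<in> space M" for w
      using \<open>t \<in> {1..T}\<close> \<open>i \<in> {1..K}\<close> that p_nonneg by (intro member_le_sum) auto
    then show "AE w in M. norm (p t i w) \<le> 1"
      using that p_nonneg p_sum by auto
  qed (use that p_meas in auto)
  have gap: "(\<Sum>i\<in>V. \<Delta> i * (\<Sum>t=1..T. \<integral>w. p t i w \<partial>M)) \<le> bandit_regret M T I l istar + C"
    unfolding V_def by (rule expected_gap_le_regret[OF I_prob self_bounding])
  have "Min (\<Delta> ` V) \<in> \<Delta> ` V"
    using \<open>finite V\<close> V_nonempty unfolding V_def by (intro Min_in) auto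
  then have "0 < Min (\<Delta> ` V)" using \<Delta>_pos by auto
  then have "S1 M T V p x \<le> z * (bandit_regret M T I l istar + C) + (1 / z) * (x / (4 * Min (\<Delta> ` V)))"
    using \<open>finite V\<close> V_sub p_int p_nonneg x_pos z_pos gap by (intro S1_le) auto
  moreover have "S2 M T V p x \<le> z * (bandit_regret M T I l istar + C) + (1 / z) * (\<Sum>i\<in>V. x / (4 * \<Delta> i))"
    using \<open>finite V\<close> V_sub p_int p_nonneg x_pos z_pos \<Delta>_pos gap by (intro S2_le) auto
  ultimately show ?thesis unfolding V_def by blast
qed

end
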